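(* Let $G$ be a quasi-regular mixed lattice group and let $x,y\in G$ with $x\preceq y$. Then for every $u\in G$, $$u\curlywedge x\preceq u\curlywedge y \qquad\text{and}\qquad u\curlyvee x\preceq u\curlyvee y .$$
   Context: A mixed lattice group is a commutative group $G$ with two partial orderings $\le$ (initial order) and $\preceq$ (specific order), both translation invariant ($x\le y\Rightarrow x+z\le y+z$, and likewise for $\preceq$), such that for all $x,y\in G$ the mixed lower envelope $x\curlywedge y=\max\{w\in G: w\preceq x \text{ and } w\le y\}$ and the mixed upper envelope $x\curlyvee y=\min\{w\in G: x\preceq w \text{ and } y\le w\}$ exist, where max and min are taken with respect to $\le$. $G$ is called quasi-regular if the set $G_{sp}=\{x\in G: 0\preceq x\}$ is closed under $\curlywedge$ and $\curlyvee$. *)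

theory Defs
  imports Main
begin

text \<open>A commutative group is modelled by a type of class ab_group_add.
  The initial order is le, the specific order is sp (both given as relations).\<close>

definition partial_order_rel :: "('a \<Rightarrow> 'a \<Rightarrow> bool) \<Rightarrow> bool" where
  "partial_order_rel r \<longleftrightarrow> (\<forall>x. r x x) \<and> (\<forall>x y z. r x y \<longrightarrow> r y z \<longrightarrow> r x z)
      \<and> (\<forall>x y. r x y \<longrightarrow> r y x \<longrightarrow> x = y)"

definition translation_invariant :: "('a::ab_group_add \<Rightarrow> 'a \<Rightarrow> bool) \<Rightarrow> bool" where
  "translation_invariant r \<longleftrightarrow> (\<forall>x y z. r x y \<longrightarrow> r (x + z) (y + z))"

definition is_greatest_rel :: "('a \<Rightarrow> 'a \<Rightarrow> bool) \<Rightarrow> 'a set \<Rightarrow> 'a \<Rightarrow> bool" where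
  "is_greatest_rel r S w \<longleftrightarrow> w \<in> S \<and> (\<forall>v\<in>S. r v w)"

definition is_least_rel :: "('a \<Rightarrow> 'a \<Rightarrow> bool) \<Rightarrow> 'a set \<Rightarrow> 'a \<Rightarrow> bool" where
  "is_least_rel r S w \<longleftrightarrow> w \<in> S \<and> (\<forall>v\<in>S. r w v)"

definition mixed_lower :: "('a \<Rightarrow> 'a \<Rightarrow> bool) \<Rightarrow> ('a \<Rightarrow> 'a \<Rightarrow> bool) \<Rightarrow> 'a \<Rightarrow> 'a \<Rightarrow> 'a" where
  "mixed_lower le sp x y = (THE w. is_greatest_rel le {w. sp w x \<and> le w y} w)"

definition mixed_upper :: "('a \<Rightarrow> 'a \<Rightarrow> bool) \<Rightarrow> ('a \<Rightarrow> 'a \<Rightarrow> bool) \<Rightarrow> 'a \<Rightarrow> 'a \<Rightarrow> 'a" where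
  "mixed_upper le sp x y = (THE w. is_least_rel le {w. sp x w \<and> le y w} w)"

definition mixed_lattice_group :: "('a::ab_group_add \<Rightarrow> 'a \<Rightarrow> bool) \<Rightarrow> ('a \<Rightarrow> 'a \<Rightarrow> bool) \<Rightarrow> bool" where
  "mixed_lattice_group le sp \<longleftrightarrow>
     partial_order_rel le \<and> partial_order_rel sp \<and>
     translation_invariant le \<and> translation_invariant sp \<and>
     (\<forall>x y. \<exists>w. is_greatest_rel le {w. sp w x \<and> le w y} w) \<and>
     (\<forall>x y. \<exists>w. is_least_rel le {w. sp x w \<and> le y w} w)"

definition quasi_regular :: "('a::ab_group_add \<Rightarrow> 'a \<Rightarrow> bool) \<Rightarrow> ('a \<Rightarrow> 'a \<Rightarrow> bool) \<Rightarrow> bool" where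
  "quasi_regular le sp \<longleftrightarrow> mixed_lattice_group le sp \<and>
     (\<forall>x y. sp 0 x \<longrightarrow> sp 0 y \<longrightarrow> sp 0 (mixed_lower le sp x y) \<and> sp 0 (mixed_upper le sp x y))"

end

theory Submission
  imports Defs
begin

text \<open>
  Put \<open>m = u \<curlywedge> x\<close>, \<open>n = u \<curlywedge> y\<close> and \<open>y' = m + (y - x)\<close>. From \<open>m \<le> x\<close> we get
  \<open>y' \<le> y\<close>; from \<open>n + (x - y) \<preceq> n \<preceq> u\<close> and \<open>n + (x - y) \<le> x\<close> we get \<open>n + (x - y) \<le> m\<close>,
  i.e. \<open>n \<le> y'\<close>. Hence \<open>u \<curlywedge> y' = n\<close>. But \<open>m \<preceq> u\<close> and \<open>m \<preceq> y'\<close>, and quasi-regularity,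
  translated from the cone above \<open>0\<close> to the cone above \<open>m\<close>, gives \<open>m \<preceq> u \<curlywedge> y' = n\<close>.
  The statement for \<open>\<curlyvee>\<close> is the dual one, since \<open>u \<curlyvee> x = -((-u) \<curlywedge> (-x))\<close>.
\<close>

lemma translation_invariant_shift:
  fixes r :: "'a::ab_group_add \<Rightarrow> 'a \<Rightarrow> bool"
  assumes "translation_invariant r" "r a b" "a' - b' = a - b"
  shows "r a' b'"
proof -
  have "r (a + (a' - a)) (b + (a' - a))"
    using assms(1,2) unfolding translation_invariant_def by blast
  moreover have "b + (a' - a) = b'"
    using assms(3) by (simp add: algebra_simps)
  ultimately show ?thesis by simp
qed

lemma translation_invariant_uminus:
  fixes r :: "'a::ab_group_add \<Rightarrow> 'a \<Rightarrow> bool"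
  assumes "translation_invariant r" "r a b"
  shows "r (- b) (- a)"
  using assms by (rule translation_invariant_shift) simp

lemma partial_order_rel_trans: "partial_order_rel r \<Longrightarrow> r a b \<Longrightarrow> r b c \<Longrightarrow> r a c"
  unfolding partial_order_rel_def by blast

lemma partial_order_rel_antisym: "partial_order_rel r \<Longrightarrow> r a b \<Longrightarrow> r b a \<Longrightarrow> a = b"
  unfolding partial_order_rel_def by blast

lemma the_is_greatest_rel:
  assumes "partial_order_rel r" "is_greatest_rel r S w"
  shows "(THE w. is_greatest_rel r S w) = w"
proof (rule the_equality)
  show "is_greatest_rel r S v \<Longrightarrow> v = w" for v
    using assms partial_order_rel_antisym[OF assms(1)] unfolding is_greatest_rel_def by blast
qed (fact assms(2))

lemma the_is_least_rel:
  assumes "partial_order_rel r" "is_least_rel r S w"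
  shows "(THE w. is_least_rel r S w) = w"
proof (rule the_equality)
  show "is_least_rel r S v \<Longrightarrow> v = w" for v
    using assms partial_order_rel_antisym[OF assms(1)] unfolding is_least_rel_def by blast
qed (fact assms(2))

lemma mixed_lattice_groupD:
  assumes "mixed_lattice_group le sp"
  shows "partial_order_rel le" "partial_order_rel sp"
    and "translation_invariant le" "translation_invariant sp"
  using assms unfolding mixed_lattice_group_def by blast+

lemma mixed_lower_eqI:
  assumes "mixed_lattice_group le sp" "sp w x" "le w y"
    and "\<And>v. sp v x \<Longrightarrow> le v y \<Longrightarrow> le v w"
  shows "mixed_lower le sp x y = w"
  unfolding mixed_lower_def
  by (rule the_is_greatest_rel[OF mixed_lattice_groupD(1)[OF assms(1)]])
    (use assms(2-4) in \<open>simp add: is_greatest_rel_def\<close>)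

lemma mixed_lower_is_greatest:
  assumes "mixed_lattice_group le sp"
  shows "is_greatest_rel le {w. sp w x \<and> le w y} (mixed_lower le sp x y)"
proof -
  obtain w where "is_greatest_rel le {w. sp w x \<and> le w y} w"
    using assms unfolding mixed_lattice_group_def by blast
  then show ?thesis
    unfolding mixed_lower_def by (simp only: the_is_greatest_rel[OF mixed_lattice_groupD(1)[OF assms]])
qed

lemma
  assumes "mixed_lattice_group le sp"
  shows mixed_lower_sp: "sp (mixed_lower le sp x y) x"
    and mixed_lower_le: "le (mixed_lower le sp x y) y"
    and mixed_lower_greatest: "sp v x \<Longrightarrow> le v y \<Longrightarrow> le v (mixed_lower le sp x y)"
  using mixed_lower_is_greatest[OF assms, of x y] unfolding is_greatest_rel_def by auto

lemma mixed_upper_eq_uminus_mixed_lower: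
  assumes "mixed_lattice_group le sp"
  shows "mixed_upper le sp x y = - mixed_lower le sp (- x) (- y)"
proof -
  note tr = mixed_lattice_groupD(3,4)[OF assms]
  obtain w where least: "is_least_rel le {w. sp x w \<and> le y w} w"
    using assms unfolding mixed_lattice_group_def by blast
  have "mixed_upper le sp x y = w"
    unfolding mixed_upper_def by (rule the_is_least_rel[OF mixed_lattice_groupD(1)[OF assms] least])
  moreover have "mixed_lower le sp (- x) (- y) = - w"
  proof (rule mixed_lower_eqI[OF assms])
    have "sp x w" "le y w"
      using least by (simp_all add: is_least_rel_def)
    then show "sp (- w) (- x)" "le (- w) (- y)"
      by (simp_all add: translation_invariant_uminus[OF tr(2)] translation_invariant_uminus[OF tr(1)])
    fix v assume "sp v (- x)" "le v (- y)"
    then have "sp x (- v)" "le y (- v)"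
      using translation_invariant_uminus[OF tr(2)] translation_invariant_uminus[OF tr(1)]
      by (metis minus_minus)+
    then have "le w (- v)"
      using least by (simp add: is_least_rel_def)
    then show "le v (- w)"
      using translation_invariant_uminus[OF tr(1)] by (metis minus_minus)
  qed
  ultimately show ?thesis by simp
qed

lemma mixed_lower_translate:
  fixes le sp :: "'a::ab_group_add \<Rightarrow> 'a \<Rightarrow> bool"
  assumes "mixed_lattice_group le sp"
  shows "mixed_lower le sp (x + c) (y + c) = mixed_lower le sp x y + c"
proof (rule mixed_lower_eqI[OF assms])
  note tr = mixed_lattice_groupD(3,4)[OF assms]
  show "sp (mixed_lower le sp x y + c) (x + c)" "le (mixed_lower le sp x y + c) (y + c)"
    by (rule translation_invariant_shift[OF tr(2) mixed_lower_sp[OF assms]], simp,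
        rule translation_invariant_shift[OF tr(1) mixed_lower_le[OF assms]], simp)
  fix v assume "sp v (x + c)" "le v (y + c)"
  then have "sp (v - c) x" "le (v - c) y"
    by (simp_all add: translation_invariant_shift[OF tr(2)] translation_invariant_shift[OF tr(1)])
  then have "le (v - c) (mixed_lower le sp x y)"
    by (rule mixed_lower_greatest[OF assms])
  then show "le v (mixed_lower le sp x y + c)"
    by (rule translation_invariant_shift[OF tr(1)]) simp
qed

lemma quasi_regular_sp_mixed_lower:
  fixes le sp :: "'a::ab_group_add \<Rightarrow> 'a \<Rightarrow> bool"
  assumes q: "quasi_regular le sp" and "sp z a" "sp z b"
  shows "sp z (mixed_lower le sp a b)"
proof -
  have mlg: "mixed_lattice_group le sp"
    using q unfolding quasi_regular_def by blast
  note tr = mixed_lattice_groupD(4)[OF mlg]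
  have "sp 0 (a - z)" "sp 0 (b - z)"
    using assms(2,3) by (simp_all add: translation_invariant_shift[OF tr])
  then have "sp 0 (mixed_lower le sp (a - z) (b - z))"
    using q unfolding quasi_regular_def by blast
  moreover have "mixed_lower le sp (a - z) (b - z) = mixed_lower le sp a b - z"
    using mixed_lower_translate[OF mlg, of a "- z" b] by simp
  ultimately have "sp 0 (mixed_lower le sp a b - z)"
    by simp
  then show ?thesis
    by (rule translation_invariant_shift[OF tr]) simp
qed

lemma quasi_regular_mixed_lower_sp_mono:
  fixes le sp :: "'a::ab_group_add \<Rightarrow> 'a \<Rightarrow> bool"
  assumes q: "quasi_regular le sp" and "sp x y"
  shows "sp (mixed_lower le sp u x) (mixed_lower le sp u y)"
proof -
  have mlg: "mixed_lattice_group le sp"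
    using q unfolding quasi_regular_def by blast
  note po = mixed_lattice_groupD(1,2)[OF mlg] and tr = mixed_lattice_groupD(3,4)[OF mlg]
  define m where "m = mixed_lower le sp u x"
  define n where "n = mixed_lower le sp u y"
  define y' where "y' = m + (y - x)"
  have "le y' y"
    using mixed_lower_le[OF mlg, of u x] unfolding y'_def m_def
    by (rule translation_invariant_shift[OF tr(1)]) simp
  have "le n y'"
  proof -
    have "sp (n + (x - y)) n"
      using \<open>sp x y\<close> by (rule translation_invariant_shift[OF tr(2)]) simp
    then have "sp (n + (x - y)) u"
      using mixed_lower_sp[OF mlg] unfolding n_def by (rule partial_order_rel_trans[OF po(2)])
    moreover have "le (n + (x - y)) x"
      using mixed_lower_le[OF mlg, of u y] unfolding n_def
      by (rule translation_invariant_shift[OF tr(1)]) simp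
    ultimately have "le (n + (x - y)) m"
      unfolding m_def by (rule mixed_lower_greatest[OF mlg])
    then show ?thesis
      unfolding y'_def by (rule translation_invariant_shift[OF tr(1)]) simp
  qed
  have "mixed_lower le sp u y' = n"
  proof (rule mixed_lower_eqI[OF mlg])
    show "sp n u" unfolding n_def by (rule mixed_lower_sp[OF mlg])
    show "le n y'" by fact
    fix v assume "sp v u" "le v y'"
    moreover from \<open>le v y'\<close> \<open>le y' y\<close> have "le v y"
      by (rule partial_order_rel_trans[OF po(1)])
    ultimately show "le v n"
      unfolding n_def by (simp add: mixed_lower_greatest[OF mlg])
  qed
  moreover have "sp m (mixed_lower le sp u y')"
  proof (rule quasi_regular_sp_mixed_lower[OF q])
    show "sp m u" unfolding m_def by (rule mixed_lower_sp[OF mlg])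
    show "sp m y'"
      using \<open>sp x y\<close> unfolding y'_def by (rule translation_invariant_shift[OF tr(2)]) simp
  qed
  ultimately show ?thesis
    unfolding m_def n_def by simp
qed

theorem theorem3p3:
  fixes le sp :: "'a::ab_group_add \<Rightarrow> 'a \<Rightarrow> bool"
  assumes "quasi_regular le sp"
    and "sp x y"
  shows "sp (mixed_lower le sp u x) (mixed_lower le sp u y) \<and>
         sp (mixed_upper le sp u x) (mixed_upper le sp u y)"
proof
  show "sp (mixed_lower le sp u x) (mixed_lower le sp u y)"
    using assms by (rule quasi_regular_mixed_lower_sp_mono)
  have mlg: "mixed_lattice_group le sp"
    using assms(1) unfolding quasi_regular_def by blast
  note tr = mixed_lattice_groupD(4)[OF mlg]
  have "sp (- y) (- x)"
    using tr assms(2) by (rule translation_invariant_uminus)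
  with assms(1) have "sp (mixed_lower le sp (- u) (- y)) (mixed_lower le sp (- u) (- x))"
    by (rule quasi_regular_mixed_lower_sp_mono)
  then have "sp (- mixed_lower le sp (- u) (- x)) (- mixed_lower le sp (- u) (- y))"
    by (rule translation_invariant_uminus[OF tr])
  then show "sp (mixed_upper le sp u x) (mixed_upper le sp u y)"
    by (simp only: mixed_upper_eq_uminus_mixed_lower[OF mlg])
qed

end
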